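(* Let $A=\langle Q,\delta,\gamma,F\rangle$ be a finitely supported pomset automaton. Then for every $q\in Q$ there exists a pomset automaton $A_q$ with finitely many states and a state $q'$ of $A_q$ such that $L_A(q)=L_{A_q}(q')$.
   Context: Fix a finite alphabet $\Sigma$; pomsets are isomorphism classes of $\Sigma$-labelled posets, $1$ the empty pomset, $a\in\Sigma$ the one-point pomset, $\cdot$ and $\parallel$ sequential and parallel composition, $\mathsf{Pom}^{\mathsf{sp}}$ the smallest set containing $1$ and all $a$ closed under both. A PA is $A=\langle Q,\delta,\gamma,F\rangle$ with $F\subseteq Q$, $\delta:Q\times\Sigma\to Q$, $\gamma:Q^3\to Q$, with states $\bot\notin F$, $\top\in F$ such that $\delta(\bot,a)=\delta(\top,a)=\bot$ and $\gamma(\bot,r,s)=\gamma(\top,r,s)=\bot$. Traces: the smallest relation with $q\xrightarrow{1}_A q$; $q\xrightarrow{a}_A\delta(q,a)$; $q\xrightarrow{U}_A q''\xrightarrow{V}_A q'$ implies $q\xrightarrow{U\cdot V}_A q'$; $r\xrightarrow{U}_A r'\in F$, $s\xrightarrow{V}_A s'\in F$ imply $q\xrightarrow{U\parallel V}_A\gamma(q,r,s)$. $L_A(q)=\{U:\exists q'\in F.\ q\xrightarrow{U}_A q'\}$. The trace dependency relation $\preceq_A$ is the smallest preorder on $Q$ with $r,s\preceq_A q$ whenever $\gamma(q,r,s)\neq\bot$, $\delta(q,a)\preceq_A q$ for all $a$, and $\gamma(q,r,s)\preceq_A q$ for all $r,s$. The support $\pi_A(q)$ is the smallest $\preceq_A$-downward-closed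 subset of $Q$ containing $q$; $A$ is finitely supported if $\pi_A(q)$ is finite for every $q$. *)

theory Defs
  imports Main
begin

text \<open>A (finite) labelled poset with carrier a finite set of naturals.
  Every finite labelled poset is isomorphic to one of this form.\<close>
type_synonym 'a lposet = "nat set \<times> (nat \<times> nat) set \<times> (nat \<Rightarrow> 'a)"

fun wf_lposet :: "'a lposet \<Rightarrow> bool" where
  "wf_lposet (C, R, l) \<longleftrightarrow> finite C \<and> R \<subseteq> C \<times> C \<and> refl_on C R \<and> antisym R \<and> trans R"

fun lposet_iso :: "'a lposet \<Rightarrow> 'a lposet \<Rightarrow> bool" where
  "lposet_iso (C, R, l) (C', R', l') \<longleftrightarrow>
     (\<exists>f. bij_betw f C C' \<and> (\<forall>x\<in>C. \<forall>y\<in>C. (x, y) \<in> R \<longleftrightarrow> (f x, f y) \<in> R')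
          \<and> (\<forall>x\<in>C. l' (f x) = l x))"

text \<open>A pomset is an isomorphism class of labelled posets.\<close>
type_synonym 'a pomset = "'a lposet set"

definition pom_of :: "'a lposet \<Rightarrow> 'a pomset" where
  "pom_of P = {P'. wf_lposet P' \<and> lposet_iso P P'}"

definition lp_empty :: "'a lposet" where
  "lp_empty = ({}, {}, \<lambda>_. undefined)"

definition lp_atom :: "'a \<Rightarrow> 'a lposet" where
  "lp_atom a = ({0}, {(0, 0)}, \<lambda>_. a)"

fun lp_seq :: "'a lposet \<Rightarrow> 'a lposet \<Rightarrow> 'a lposet" where
  "lp_seq (C, R, l) (C', R', l') =
     ((\<lambda>x. 2 * x) ` C \<union> (\<lambda>x. 2 * x + 1) ` C',
      (\<lambda>(x, y). (2 * x, 2 * y)) ` R \<union> (\<lambda>(x, y). (2 * x + 1, 2 * y + 1)) ` R'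
        \<union> {(2 * x, 2 * y + 1) | x y. x \<in> C \<and> y \<in> C'},
      \<lambda>n. if even n then l (n div 2) else l' (n div 2))"

fun lp_par :: "'a lposet \<Rightarrow> 'a lposet \<Rightarrow> 'a lposet" where
  "lp_par (C, R, l) (C', R', l') =
     ((\<lambda>x. 2 * x) ` C \<union> (\<lambda>x. 2 * x + 1) ` C',
      (\<lambda>(x, y). (2 * x, 2 * y)) ` R \<union> (\<lambda>(x, y). (2 * x + 1, 2 * y + 1)) ` R',
      \<lambda>n. if even n then l (n div 2) else l' (n div 2))"

definition pom_one :: "'a pomset" where
  "pom_one = pom_of lp_empty"

definition pom_atom :: "'a \<Rightarrow> 'a pomset" where
  "pom_atom a = pom_of (lp_atom a)"

text \<open>Sequential and parallel composition of pomsets (computed on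
  representatives, which is independent of the choice up to isomorphism).\<close>
definition pom_seq :: "'a pomset \<Rightarrow> 'a pomset \<Rightarrow> 'a pomset" where
  "pom_seq U V = (\<Union>u\<in>U. \<Union>v\<in>V. pom_of (lp_seq u v))"

definition pom_par :: "'a pomset \<Rightarrow> 'a pomset \<Rightarrow> 'a pomset" where
  "pom_par U V = (\<Union>u\<in>U. \<Union>v\<in>V. pom_of (lp_par u v))"

text \<open>A pomset automaton with state set \<open>pa_Q\<close> (a subset of the state type),
  transition functions (only their values on \<open>pa_Q\<close> matter), accepting
  states, and the distinguished states \<open>\<bottom>\<close> and \<open>\<top>\<close>.\<close>
record ('q, 'a) pa =
  pa_Q :: "'q set"
  pa_delta :: "'q \<Rightarrow> 'a \<Rightarrow> 'q"
  pa_gamma :: "'q \<Rightarrow> 'q \<Rightarrow> 'q \<Rightarrow> 'q"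
  pa_F :: "'q set"
  pa_bot :: 'q
  pa_top :: 'q

definition is_pa :: "('q, 'a) pa \<Rightarrow> bool" where
  "is_pa A \<longleftrightarrow>
     pa_F A \<subseteq> pa_Q A \<and> pa_bot A \<in> pa_Q A \<and> pa_top A \<in> pa_Q A
     \<and> pa_bot A \<notin> pa_F A \<and> pa_top A \<in> pa_F A
     \<and> (\<forall>q\<in>pa_Q A. \<forall>a. pa_delta A q a \<in> pa_Q A)
     \<and> (\<forall>q\<in>pa_Q A. \<forall>r\<in>pa_Q A. \<forall>s\<in>pa_Q A. pa_gamma A q r s \<in> pa_Q A)
     \<and> (\<forall>a. pa_delta A (pa_bot A) a = pa_bot A \<and> pa_delta A (pa_top A) a = pa_bot A)
     \<and> (\<forall>r\<in>pa_Q A. \<forall>s\<in>pa_Q A.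
           pa_gamma A (pa_bot A) r s = pa_bot A \<and> pa_gamma A (pa_top A) r s = pa_bot A)"

inductive pa_trace :: "('q, 'a) pa \<Rightarrow> 'q \<Rightarrow> 'a pomset \<Rightarrow> 'q \<Rightarrow> bool"
  for A :: "('q, 'a) pa" where
  tr_one: "q \<in> pa_Q A \<Longrightarrow> pa_trace A q pom_one q"
| tr_atom: "q \<in> pa_Q A \<Longrightarrow> pa_trace A q (pom_atom a) (pa_delta A q a)"
| tr_seq: "pa_trace A q U q'' \<Longrightarrow> pa_trace A q'' V q' \<Longrightarrow> pa_trace A q (pom_seq U V) q'"
| tr_par: "q \<in> pa_Q A \<Longrightarrow> pa_trace A r U r' \<Longrightarrow> r' \<in> pa_F A \<Longrightarrow>
           pa_trace A s V s' \<Longrightarrow> s' \<in> pa_F A \<Longrightarrow>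
           pa_trace A q (pom_par U V) (pa_gamma A q r s)"

definition pa_lang :: "('q, 'a) pa \<Rightarrow> 'q \<Rightarrow> 'a pomset set" where
  "pa_lang A q = {U. \<exists>q'\<in>pa_F A. pa_trace A q U q'}"

text \<open>Generating steps of the trace dependency relation: \<open>(p, q)\<close> means \<open>p \<preceq> q\<close>.\<close>
definition pa_dep_step :: "('q, 'a) pa \<Rightarrow> ('q \<times> 'q) set" where
  "pa_dep_step A =
     {(r, q) | q r s. q \<in> pa_Q A \<and> r \<in> pa_Q A \<and> s \<in> pa_Q A \<and> pa_gamma A q r s \<noteq> pa_bot A}
   \<union> {(s, q) | q r s. q \<in> pa_Q A \<and> r \<in> pa_Q A \<and> s \<in> pa_Q A \<and> pa_gamma A q r s \<noteq> pa_bot A}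
   \<union> {(pa_delta A q a, q) | q a. q \<in> pa_Q A}
   \<union> {(pa_gamma A q r s, q) | q r s. q \<in> pa_Q A \<and> r \<in> pa_Q A \<and> s \<in> pa_Q A}"

definition pa_dep :: "('q, 'a) pa \<Rightarrow> ('q \<times> 'q) set" where
  "pa_dep A = Restr ((pa_dep_step A)\<^sup>*) (pa_Q A)"

definition pa_support :: "('q, 'a) pa \<Rightarrow> 'q \<Rightarrow> 'q set" where
  "pa_support A q = \<Inter>{S. S \<subseteq> pa_Q A \<and> q \<in> S \<and> (\<forall>p p'. (p, p') \<in> pa_dep A \<and> p' \<in> S \<longrightarrow> p \<in> S)}"

definition finitely_supported :: "('q, 'a) pa \<Rightarrow> bool" where
  "finitely_supported A \<longleftrightarrow> (\<forall>q\<in>pa_Q A. finite (pa_support A q))"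

end

theory Submission
  imports Defs
begin

text \<open>The support of \<open>q\<close>, together with \<open>\<bottom>\<close> and \<open>\<top>\<close>, is closed under \<open>\<delta>\<close> and \<open>\<gamma>\<close>
  and contains \<open>r\<close> and \<open>s\<close> whenever it contains \<open>p\<close> and \<open>\<gamma>(p, r, s) \<noteq> \<bottom>\<close>.  A trace
  ending in an accepting state never passes through \<open>\<bottom>\<close>, so each of its parallel
  steps forks into states of this set; hence restricting the automaton to the set
  does not change the language of \<open>q\<close>.  When the support is finite, renaming the
  states of the restriction injectively into the naturals gives the automaton.\<close>

lemma is_paD:
  assumes "is_pa A"
  shows pa_F_subset_Q: "pa_F A \<subseteq> pa_Q A"
    and pa_bot_in_Q: "pa_bot A \<in> pa_Q A"
    and pa_top_in_Q: "pa_top A \<in> pa_Q A"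
    and pa_bot_notin_F: "pa_bot A \<notin> pa_F A"
    and pa_delta_in_Q: "q \<in> pa_Q A \<Longrightarrow> pa_delta A q a \<in> pa_Q A"
    and pa_gamma_in_Q: "\<lbrakk>q \<in> pa_Q A; r \<in> pa_Q A; s \<in> pa_Q A\<rbrakk> \<Longrightarrow> pa_gamma A q r s \<in> pa_Q A"
    and pa_delta_bot: "pa_delta A (pa_bot A) a = pa_bot A"
    and pa_delta_top: "pa_delta A (pa_top A) a = pa_bot A"
    and pa_gamma_bot: "\<lbrakk>r \<in> pa_Q A; s \<in> pa_Q A\<rbrakk> \<Longrightarrow> pa_gamma A (pa_bot A) r s = pa_bot A"
    and pa_gamma_top: "\<lbrakk>r \<in> pa_Q A; s \<in> pa_Q A\<rbrakk> \<Longrightarrow> pa_gamma A (pa_top A) r s = pa_bot A"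
  using assms unfolding is_pa_def by blast+

lemma pa_trace_states_in_Q:
  assumes "is_pa A" and "pa_trace A p U p'"
  shows "p \<in> pa_Q A \<and> p' \<in> pa_Q A"
  using assms(2) by induction (use assms(1) in \<open>auto simp: is_pa_def\<close>)

lemma pa_trace_from_bot:
  assumes "is_pa A" and "pa_trace A (pa_bot A) U p'"
  shows "p' = pa_bot A"
  using assms(2)
proof (induction "pa_bot A" U p' rule: pa_trace.induct)
  case (tr_par r U r' s V s')
  then show ?case
    using assms(1) pa_trace_states_in_Q[OF assms(1)] by (simp add: is_pa_def)
qed (use assms(1) in \<open>auto simp: is_pa_def\<close>)

definition pa_closed :: "('q, 'a) pa \<Rightarrow> 'q set \<Rightarrow> bool" where
  "pa_closed A S \<longleftrightarrow> S \<subseteq> pa_Q A \<and> pa_bot A \<in> S \<and> pa_top A \<in> S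
     \<and> (\<forall>p\<in>S. \<forall>a. pa_delta A p a \<in> S)
     \<and> (\<forall>p\<in>S. \<forall>r\<in>pa_Q A. \<forall>s\<in>pa_Q A.
          pa_gamma A p r s \<in> S \<and> (pa_gamma A p r s \<noteq> pa_bot A \<longrightarrow> r \<in> S \<and> s \<in> S))"

lemma pa_closedD:
  assumes "pa_closed A S"
  shows pa_closed_subset_Q: "S \<subseteq> pa_Q A"
    and pa_closed_bot: "pa_bot A \<in> S"
    and pa_closed_top: "pa_top A \<in> S"
    and pa_closed_delta: "p \<in> S \<Longrightarrow> pa_delta A p a \<in> S"
    and pa_closed_gamma: "\<lbrakk>p \<in> S; r \<in> pa_Q A; s \<in> pa_Q A\<rbrakk> \<Longrightarrow> pa_gamma A p r s \<in> S"
    and pa_closed_fork: "\<lbrakk>p \<in> S; r \<in> pa_Q A; s \<in> pa_Q A; pa_gamma A p r s \<noteq> pa_bot A\<rbrakk>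
                          \<Longrightarrow> r \<in> S \<and> s \<in> S"
  using assms unfolding pa_closed_def by blast+

definition pa_restrict :: "('q, 'a) pa \<Rightarrow> 'q set \<Rightarrow> ('q, 'a) pa" where
  "pa_restrict A S = A\<lparr>pa_Q := S, pa_F := pa_F A \<inter> S\<rparr>"

lemma pa_restrict_simps [simp]:
  "pa_Q (pa_restrict A S) = S" "pa_F (pa_restrict A S) = pa_F A \<inter> S"
  "pa_delta (pa_restrict A S) = pa_delta A" "pa_gamma (pa_restrict A S) = pa_gamma A"
  "pa_bot (pa_restrict A S) = pa_bot A" "pa_top (pa_restrict A S) = pa_top A"
  by (simp_all add: pa_restrict_def)

lemma is_pa_restrict:
  assumes A: "is_pa A" and S: "pa_closed A S"
  shows "is_pa (pa_restrict A S)"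
proof -
  have "S \<subseteq> pa_Q A" using pa_closed_subset_Q[OF S] .
  with A show ?thesis
    using pa_closed_bot[OF S] pa_closed_top[OF S] pa_closed_delta[OF S] pa_closed_gamma[OF S]
    unfolding is_pa_def by (auto simp: subset_iff)
qed

lemma pa_trace_restrictD:
  assumes "S \<subseteq> pa_Q A" and "pa_trace (pa_restrict A S) p U p'"
  shows "pa_trace A p U p'"
  using assms(2) by induction (use assms(1) in \<open>auto intro: pa_trace.intros\<close>)

lemma pa_trace_restrictI:
  assumes A: "is_pa A" and S: "pa_closed A S"
    and "pa_trace A p U p'" and "p \<in> S" and "p' \<noteq> pa_bot A"
  shows "pa_trace (pa_restrict A S) p U p'"
  using assms(3-)
proof induction
  case (tr_one q)
  then show ?case using pa_trace.tr_one[of q "pa_restrict A S"] by simp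
next
  case (tr_atom q a)
  then show ?case using pa_trace.tr_atom[of q "pa_restrict A S"] by simp
next
  case (tr_seq q U q'' V q')
  have "q'' \<noteq> pa_bot A" using tr_seq pa_trace_from_bot[OF A] by blast
  with tr_seq have first: "pa_trace (pa_restrict A S) q U q''" by blast
  then have "q'' \<in> S" using pa_trace_states_in_Q[OF is_pa_restrict[OF A S]] by simp
  with tr_seq first show ?case using pa_trace.tr_seq by metis
next
  case (tr_par q r U r' s V s')
  have "r \<in> S" "s \<in> S"
    using tr_par pa_closed_fork[OF S] pa_trace_states_in_Q[OF A] by blast+
  moreover have "r' \<noteq> pa_bot A" "s' \<noteq> pa_bot A" using tr_par pa_bot_notin_F[OF A] by auto
  ultimately have left: "pa_trace (pa_restrict A S) r U r'"
    and right: "pa_trace (pa_restrict A S) s V s'"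
    using tr_par by blast+
  then have "r' \<in> S" "s' \<in> S"
    using pa_trace_states_in_Q[OF is_pa_restrict[OF A S]] by simp_all
  with left right tr_par show ?case
    using pa_trace.tr_par[of q "pa_restrict A S" r U r' s V s'] by simp
qed

lemma pa_lang_restrict:
  assumes A: "is_pa A" and S: "pa_closed A S" and "q \<in> S"
  shows "pa_lang (pa_restrict A S) q = pa_lang A q"
proof
  show "pa_lang (pa_restrict A S) q \<subseteq> pa_lang A q"
    using pa_trace_restrictD[OF pa_closed_subset_Q[OF S]] by (auto simp: pa_lang_def)
next
  show "pa_lang A q \<subseteq> pa_lang (pa_restrict A S) q"
  proof
    fix U assume "U \<in> pa_lang A q"
    then obtain p' where "p' \<in> pa_F A" "pa_trace A q U p'" by (auto simp: pa_lang_def)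
    moreover from \<open>p' \<in> pa_F A\<close> have "p' \<noteq> pa_bot A" using pa_bot_notin_F[OF A] by auto
    ultimately have "pa_trace (pa_restrict A S) q U p'"
      using pa_trace_restrictI[OF A S] \<open>q \<in> S\<close> by blast
    moreover from this have "p' \<in> S"
      using pa_trace_states_in_Q[OF is_pa_restrict[OF A S]] by simp
    ultimately show "U \<in> pa_lang (pa_restrict A S) q"
      using \<open>p' \<in> pa_F A\<close> by (auto simp: pa_lang_def)
  qed
qed

definition pa_rename :: "('q \<Rightarrow> 'b) \<Rightarrow> ('q, 'a) pa \<Rightarrow> ('b, 'a) pa" where
  "pa_rename f A =
     \<lparr>pa_Q = f ` pa_Q A,
      pa_delta = (\<lambda>m a. f (pa_delta A (inv_into (pa_Q A) f m) a)),
      pa_gamma = (\<lambda>m r s. f (pa_gamma A (inv_into (pa_Q A) f m)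
                                (inv_into (pa_Q A) f r) (inv_into (pa_Q A) f s))),
      pa_F = f ` pa_F A, pa_bot = f (pa_bot A), pa_top = f (pa_top A)\<rparr>"

lemma pa_rename_simps [simp]:
  "pa_Q (pa_rename f A) = f ` pa_Q A" "pa_F (pa_rename f A) = f ` pa_F A"
  "pa_delta (pa_rename f A) m a = f (pa_delta A (inv_into (pa_Q A) f m) a)"
  "pa_gamma (pa_rename f A) m r s =
     f (pa_gamma A (inv_into (pa_Q A) f m) (inv_into (pa_Q A) f r) (inv_into (pa_Q A) f s))"
  "pa_bot (pa_rename f A) = f (pa_bot A)" "pa_top (pa_rename f A) = f (pa_top A)"
  by (simp_all add: pa_rename_def)

lemma is_pa_rename:
  assumes A: "is_pa A" and f: "inj_on f (pa_Q A)"
  shows "is_pa (pa_rename f A)"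
proof -
  have "f (pa_bot A) \<notin> f ` pa_F A"
    using f pa_bot_in_Q[OF A] pa_bot_notin_F[OF A] pa_F_subset_Q[OF A]
    by (simp add: inj_on_image_mem_iff)
  with A f show ?thesis
    unfolding is_pa_def by (auto simp: inv_into_into)
qed

lemma pa_trace_rename:
  assumes A: "is_pa A" and f: "inj_on f (pa_Q A)" and "pa_trace A p U p'"
  shows "pa_trace (pa_rename f A) (f p) U (f p')"
  using assms(3)
proof induction
  case (tr_one q)
  then show ?case using pa_trace.tr_one[of "f q" "pa_rename f A"] by simp
next
  case (tr_atom q a)
  then show ?case using pa_trace.tr_atom[of "f q" "pa_rename f A" a] f by simp
next
  case (tr_seq q U q'' V q')
  then show ?case using pa_trace.tr_seq by metis
next
  case (tr_par q r U r' s V s')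
  have "r \<in> pa_Q A" "s \<in> pa_Q A" using tr_par pa_trace_states_in_Q[OF A] by blast+
  with tr_par f show ?case
    using pa_trace.tr_par[of "f q" "pa_rename f A" "f r" U "f r'" "f s" V "f s'"] by simp
qed

lemma pa_trace_rename_inv:
  assumes A: "is_pa A" and f: "inj_on f (pa_Q A)" and "pa_trace (pa_rename f A) m U m'"
  shows "pa_trace A (inv_into (pa_Q A) f m) U (inv_into (pa_Q A) f m')"
  using assms(3)
proof induction
  case (tr_one q)
  then show ?case by (auto simp: f inv_into_into intro: pa_trace.tr_one)
next
  case (tr_atom q a)
  then have "inv_into (pa_Q A) f q \<in> pa_Q A" by (simp add: inv_into_into)
  moreover from this have "pa_delta A (inv_into (pa_Q A) f q) a \<in> pa_Q A"
    by (rule pa_delta_in_Q[OF A])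
  ultimately show ?case using f by (simp add: pa_trace.tr_atom)
next
  case (tr_seq q U q'' V q')
  then show ?case using pa_trace.tr_seq by metis
next
  case (tr_par q r U r' s V s')
  let ?h = "inv_into (pa_Q A) f"
  have "r \<in> f ` pa_Q A" "s \<in> f ` pa_Q A"
    using tr_par pa_trace_states_in_Q[OF is_pa_rename[OF A f]] by simp_all
  with tr_par have Q: "?h q \<in> pa_Q A" "?h r \<in> pa_Q A" "?h s \<in> pa_Q A"
    by (simp_all add: inv_into_into)
  with tr_par f pa_F_subset_Q[OF A] have "?h r' \<in> pa_F A" "?h s' \<in> pa_F A" by auto
  with tr_par Q have "pa_trace A (?h q) (pom_par U V) (pa_gamma A (?h q) (?h r) (?h s))"
    by (simp add: pa_trace.tr_par)
  moreover have "pa_gamma A (?h q) (?h r) (?h s) \<in> pa_Q A" using pa_gamma_in_Q[OF A Q] .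
  ultimately show ?case using f by simp
qed

lemma pa_lang_rename:
  assumes A: "is_pa A" and f: "inj_on f (pa_Q A)" and "q \<in> pa_Q A"
  shows "pa_lang (pa_rename f A) (f q) = pa_lang A q"
proof
  show "pa_lang A q \<subseteq> pa_lang (pa_rename f A) (f q)"
    using pa_trace_rename[OF A f] by (auto simp: pa_lang_def)
next
  show "pa_lang (pa_rename f A) (f q) \<subseteq> pa_lang A q"
  proof
    fix U assume "U \<in> pa_lang (pa_rename f A) (f q)"
    then obtain p' where "p' \<in> pa_F A" "pa_trace (pa_rename f A) (f q) U (f p')"
      by (auto simp: pa_lang_def)
    then show "U \<in> pa_lang A q"
      using pa_trace_rename_inv[OF A f] f \<open>q \<in> pa_Q A\<close> pa_F_subset_Q[OF A]
      by (fastforce simp: pa_lang_def)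
  qed
qed

lemma pa_support_self: "q \<in> pa_support A q"
  by (simp add: pa_support_def)

lemma pa_support_subset_Q: "q \<in> pa_Q A \<Longrightarrow> pa_support A q \<subseteq> pa_Q A"
  unfolding pa_support_def pa_dep_def by blast

lemma pa_support_dep_step:
  assumes "(p, p') \<in> pa_dep_step A" and "p \<in> pa_Q A" and "p' \<in> pa_support A q"
  shows "p \<in> pa_support A q"
  using assms unfolding pa_support_def pa_dep_def by blast

lemma pa_dep_step_delta: "q \<in> pa_Q A \<Longrightarrow> (pa_delta A q a, q) \<in> pa_dep_step A"
  unfolding pa_dep_step_def by blast

lemma pa_dep_step_gamma:
  "\<lbrakk>q \<in> pa_Q A; r \<in> pa_Q A; s \<in> pa_Q A\<rbrakk> \<Longrightarrow> (pa_gamma A q r s, q) \<in> pa_dep_step A"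
  unfolding pa_dep_step_def by blast

lemma pa_dep_step_fork:
  assumes "q \<in> pa_Q A" "r \<in> pa_Q A" "s \<in> pa_Q A" "pa_gamma A q r s \<noteq> pa_bot A"
  shows "(r, q) \<in> pa_dep_step A" and "(s, q) \<in> pa_dep_step A"
  using assms unfolding pa_dep_step_def by blast+

lemma pa_closed_support:
  assumes A: "is_pa A" and "q \<in> pa_Q A"
  shows "pa_closed A (pa_support A q \<union> {pa_bot A, pa_top A})"
proof -
  have sub: "pa_support A q \<subseteq> pa_Q A" using pa_support_subset_Q[OF \<open>q \<in> pa_Q A\<close>] .
  have delta: "pa_delta A p a \<in> pa_support A q" if "p \<in> pa_support A q" for p a
  proof -
    have "p \<in> pa_Q A" using that sub by blast
    with that show ?thesis
      by (intro pa_support_dep_step[OF pa_dep_step_delta pa_delta_in_Q[OF A]])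
  qed
  have gamma: "pa_gamma A p r s \<in> pa_support A q"
    if "p \<in> pa_support A q" "r \<in> pa_Q A" "s \<in> pa_Q A" for p r s
  proof -
    have "p \<in> pa_Q A" using that sub by blast
    with that show ?thesis
      by (intro pa_support_dep_step[OF pa_dep_step_gamma pa_gamma_in_Q[OF A]])
  qed
  have fork: "r \<in> pa_support A q \<and> s \<in> pa_support A q"
    if "p \<in> pa_support A q" "r \<in> pa_Q A" "s \<in> pa_Q A" "pa_gamma A p r s \<noteq> pa_bot A"
    for p r s
  proof -
    have "p \<in> pa_Q A" using that sub by blast
    note steps = pa_dep_step_fork[OF this that(2-4)]
    show ?thesis
      using pa_support_dep_step[OF steps(1) that(2,1)] pa_support_dep_step[OF steps(2) that(3,1)] ..
  qed
  show ?thesis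
    unfolding pa_closed_def
  proof (intro conjI ballI allI impI)
    show "pa_support A q \<union> {pa_bot A, pa_top A} \<subseteq> pa_Q A"
      using sub pa_bot_in_Q[OF A] pa_top_in_Q[OF A] by blast
  next
    fix p a assume "p \<in> pa_support A q \<union> {pa_bot A, pa_top A}"
    then show "pa_delta A p a \<in> pa_support A q \<union> {pa_bot A, pa_top A}"
      using delta pa_delta_bot[OF A] pa_delta_top[OF A] by auto
  next
    fix p r s assume p: "p \<in> pa_support A q \<union> {pa_bot A, pa_top A}"
      and rs: "r \<in> pa_Q A" "s \<in> pa_Q A"
    show "pa_gamma A p r s \<in> pa_support A q \<union> {pa_bot A, pa_top A}"
      using p gamma[OF _ rs] pa_gamma_bot[OF A rs] pa_gamma_top[OF A rs] by blast
    assume "pa_gamma A p r s \<noteq> pa_bot A"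
    then have "p \<in> pa_support A q"
      using p pa_gamma_bot[OF A rs] pa_gamma_top[OF A rs] by blast
    with fork[OF _ rs \<open>pa_gamma A p r s \<noteq> pa_bot A\<close>]
    show "r \<in> pa_support A q \<union> {pa_bot A, pa_top A}"
      and "s \<in> pa_support A q \<union> {pa_bot A, pa_top A}" by simp_all
  qed simp_all
qed

lemma ex_finite_nat_pa_lang_eq:
  fixes A :: "('q, 'a) pa"
  assumes A: "is_pa A" and "finite (pa_Q A)" and "q \<in> pa_Q A"
  shows "\<exists>B :: (nat, 'a) pa. is_pa B \<and> finite (pa_Q B) \<and>
           (\<exists>q'\<in>pa_Q B. pa_lang A q = pa_lang B q')"
proof -
  obtain f :: "'q \<Rightarrow> nat" where f: "inj_on f (pa_Q A)"
    using finite_imp_inj_to_nat_seg[OF \<open>finite (pa_Q A)\<close>] by blast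
  show ?thesis
  proof (intro exI conjI bexI)
    show "is_pa (pa_rename f A)" using is_pa_rename[OF A f] .
    show "finite (pa_Q (pa_rename f A))" using \<open>finite (pa_Q A)\<close> by simp
    show "f q \<in> pa_Q (pa_rename f A)" using \<open>q \<in> pa_Q A\<close> by simp
    show "pa_lang A q = pa_lang (pa_rename f A) (f q)"
      using pa_lang_rename[OF A f \<open>q \<in> pa_Q A\<close>] by simp
  qed
qed

theorem mainTheorem6:
  fixes A :: "('q, 'a::finite) pa"
  assumes "is_pa A"
    and "finitely_supported A"
    and "q \<in> pa_Q A"
  shows "\<exists>B :: (nat, 'a) pa. is_pa B \<and> finite (pa_Q B) \<and>
           (\<exists>q'\<in>pa_Q B. pa_lang A q = pa_lang B q')"
proof -
  define S where "S = pa_support A q \<union> {pa_bot A, pa_top A}"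
  have S: "pa_closed A S" using pa_closed_support[OF assms(1,3)] by (simp add: S_def)
  have "q \<in> S" using pa_support_self[of q A] by (simp add: S_def)
  have "finite S" using assms(2,3) by (simp add: S_def finitely_supported_def)
  have "is_pa (pa_restrict A S)" using is_pa_restrict[OF assms(1) S] .
  moreover have "pa_lang (pa_restrict A S) q = pa_lang A q"
    using pa_lang_restrict[OF assms(1) S \<open>q \<in> S\<close>] .
  ultimately show ?thesis
    using ex_finite_nat_pa_lang_eq[of "pa_restrict A S" q] \<open>finite S\<close> \<open>q \<in> S\<close> by simp
qed

end
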